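(* Let $K\subseteq\mathbb{R}^d$ be nonempty, closed and convex with $B(0,1)\subseteq K\subseteq B(0,R)$ for some $R>1$, and let $\pi$ be uniform on $K$. Run the ASF for the uniform distribution on $K$ with step size $\eta=1/d^2$ from an $M$-warm initial distribution $\mu_0$, implementing step (2) for $y=y_k$ by the following rejection sampler: choose any $\hat x=\hat x(y)\in K$ with $\frac{1}{2\eta}\|\hat x-y\|^2-\min_{x\in K}\frac{1}{2\eta}\|x-y\|^2\le\frac1d$; then repeat {draw $X$ from the density $\nu(x)\propto\exp(-\mathcal{P}_2(x))$ and independent $U\sim\mathcal{U}[0,1]$; accept $X$ if $U\le\exp(-\Theta^{\eta,K}_y(X))/\exp(-\mathcal{P}_2(X))$}. Then, for every iteration $k$, the expected number of trials $\mathbb{E}[n_{y_k}]$, with $n_y=\frac{\int_{\mathbb{R}^d}\exp(-\mathcal{P}_2(x))dx}{\int_K\exp(-\frac{1}{2\eta}\|x-y\|^2)dx}$ and expectation over the law of $y_k$, satisfies $$\mathbb{E}[n_{y_k}]\le\sqrt{2\pi}\,M\exp\Bigl(\frac{13}{4}+\frac{20}{d}\Bigr)+M\exp\Bigl(\frac94+\frac{12}{d}\Bigr).$$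
   Context: ASF with step size $\eta$: given $x_k$, (1) sample $y_k\sim\mathcal{N}(x_k,\eta I_d)$; (2) sample $x_{k+1}$ from the density proportional to $\exp(-\|x-y_k\|^2/(2\eta))\mathbf{1}_K(x)$. $M$-warm: $\mu_0\ll\pi$ and $d\mu_0/d\pi\le M$. $I_K=0$ on $K$, $+\infty$ off $K$; $\Theta^{\eta,K}_y(x)=I_K(x)+\frac{1}{2\eta}\|x-y\|^2$; $\mathcal{P}_2(x)=\frac{1}{2\eta}\Bigl(\|x-\hat x\|^2+\|\hat x-y\|^2-2\sqrt{\tfrac{2\eta}{d}}\bigl(\|x-\hat x\|+\|\hat x-y\|\bigr)-\tfrac{12\eta}{d}\Bigr)$. *)

theory Defs
  imports "HOL-Probability.Probability"
begin

definition gauss_kernel :: "real \<Rightarrow> 'a::euclidean_space \<Rightarrow> 'a measure" where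
  "gauss_kernel \<eta> x = density lborel
     (\<lambda>y. ennreal ((2 * pi * \<eta>) powr (- real DIM('a) / 2) * exp (- (norm (y - x))\<^sup>2 / (2 * \<eta>))))"

definition restricted_gauss :: "real \<Rightarrow> 'a::euclidean_space set \<Rightarrow> 'a \<Rightarrow> 'a measure" where
  "restricted_gauss \<eta> K y = density lborel
     (\<lambda>x. indicator K x * ennreal (exp (- (norm (x - y))\<^sup>2 / (2 * \<eta>)))
          / (\<integral>\<^sup>+ z. indicator K z * ennreal (exp (- (norm (z - y))\<^sup>2 / (2 * \<eta>))) \<partial>lborel))"

primrec asf_x_law :: "real \<Rightarrow> 'a::euclidean_space set \<Rightarrow> 'a measure \<Rightarrow> nat \<Rightarrow> 'a measure" where
  "asf_x_law \<eta> K \<mu>0 0 = \<mu>0"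
| "asf_x_law \<eta> K \<mu>0 (Suc k) =
     bind (bind (asf_x_law \<eta> K \<mu>0 k) (gauss_kernel \<eta>)) (restricted_gauss \<eta> K)"

definition asf_y_law :: "real \<Rightarrow> 'a::euclidean_space set \<Rightarrow> 'a measure \<Rightarrow> nat \<Rightarrow> 'a measure" where
  "asf_y_law \<eta> K \<mu>0 k = bind (asf_x_law \<eta> K \<mu>0 k) (gauss_kernel \<eta>)"

definition warm :: "real \<Rightarrow> 'a measure \<Rightarrow> 'a measure \<Rightarrow> bool" where
  "warm M \<mu>0 \<pi> \<longleftrightarrow> sets \<mu>0 = sets \<pi> \<and> absolutely_continuous \<pi> \<mu>0 \<and>
     (AE x in \<pi>. RN_deriv \<pi> \<mu>0 x \<le> ennreal M)"

definition P2 :: "real \<Rightarrow> real \<Rightarrow> 'a::real_normed_vector \<Rightarrow> 'a \<Rightarrow> 'a \<Rightarrow> real" where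
  "P2 \<eta> d xh y x = (1 / (2 * \<eta>)) *
     ((norm (x - xh))\<^sup>2 + (norm (xh - y))\<^sup>2
      - 2 * sqrt (2 * \<eta> / d) * (norm (x - xh) + norm (xh - y)) - 12 * \<eta> / d)"

definition n_trials :: "real \<Rightarrow> 'a::euclidean_space set \<Rightarrow> 'a \<Rightarrow> 'a \<Rightarrow> ennreal" where
  "n_trials \<eta> K xh y =
     (\<integral>\<^sup>+ x. ennreal (exp (- P2 \<eta> (real DIM('a)) xh y x)) \<partial>lborel)
     / (\<integral>\<^sup>+ x. indicator K x * ennreal (exp (- (norm (x - y))\<^sup>2 / (2 * \<eta>))) \<partial>lborel)"

end

theory Submission
  imports Defs
begin

text \<open>The uniform distribution on \<open>K\<close> is stationary for the ASF, so \<open>M\<close>-warmness propagates and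
  \<open>E[n_{y_k}] \<le> M / vol K \<cdot> \<integral>\<^sub>K \<integral> n_y N(x, \<eta> I)(dy) dx\<close>. Integrating the Gaussian in \<open>x \<in> K\<close>
  first produces exactly the denominator of \<open>n_y\<close>, which cancels, leaving
  \<open>(2\<pi>\<eta>)^{-d/2} \<integral> \<integral> exp(-P_2) dx dy\<close>. Completing squares bounds \<open>exp(-P_2)\<close> by a Gaussian around
  \<open>x\<^sub>h\<close> of variance \<open>\<eta>(d+1)/d\<close> times \<open>exp(19/8 + 25/(2d) - (3d/2) dist(y, K))\<close>, and
  \<open>\<integral> exp(-c dist(y, K)) dy \<le> c/(c - d) vol K\<close> because the \<open>r\<close>-neighbourhood of \<open>K\<close> lies in
  \<open>(1 + r) K\<close> when \<open>B(0,1) \<subseteq> K\<close>. With \<open>c = 3d/2\<close> the result is \<open>3 e^{23/8 + 25/(2d)} M\<close>.\<close>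

section \<open>Gaussian integrals and the ASF kernels\<close>

lemma nn_integral_gaussian_real:
  fixes m s :: real
  assumes "s > 0"
  shows "(\<integral>\<^sup>+t. ennreal (exp (- (t - m)\<^sup>2 / s)) \<partial>lborel) = ennreal (sqrt (pi * s))"
proof -
  define \<sigma> where "\<sigma> = sqrt (s / 2)"
  have \<sigma>: "\<sigma> > 0" "2 * \<sigma>\<^sup>2 = s" "sqrt 2 * \<sigma> = sqrt s"
    using assms by (auto simp: \<sigma>_def real_sqrt_mult[symmetric])
  have density: "exp (- (t - m)\<^sup>2 / s) = sqrt (pi * s) * normal_density m \<sigma> t" for t
    using \<sigma> assms by (simp add: normal_density_def real_sqrt_mult)
  have "(\<integral>\<^sup>+t. ennreal (exp (- (t - m)\<^sup>2 / s)) \<partial>lborel)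
      = (\<integral>\<^sup>+t. ennreal (sqrt (pi * s)) * ennreal (normal_density m \<sigma> t) \<partial>lborel)"
    using assms by (intro nn_integral_cong) (subst density, rule ennreal_mult, auto)
  moreover have "(\<integral>\<^sup>+t. ennreal (normal_density m \<sigma> t) \<partial>lborel) = 1"
    using \<sigma> by (subst nn_integral_eq_integral) auto
  ultimately show ?thesis
    by (simp add: nn_integral_cmult)
qed

lemma nn_integral_gaussian:
  fixes p :: "'a::euclidean_space"
  assumes "s > 0"
  shows "(\<integral>\<^sup>+x. ennreal (exp (- (norm (x - p))\<^sup>2 / s)) \<partial>lborel)
       = ennreal ((pi * s) powr (real DIM('a) / 2))"
proof -
  have product: "exp (- (norm (x - p))\<^sup>2 / s) = (\<Prod>b\<in>Basis. exp (- (x \<bullet> b - p \<bullet> b)\<^sup>2 / s))" for x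
  proof -
    have "(norm (x - p))\<^sup>2 = (\<Sum>b\<in>Basis. (x - p) \<bullet> b * ((x - p) \<bullet> b))"
      by (simp add: power2_norm_eq_inner euclidean_inner[of "x - p" "x - p"])
    then have "(norm (x - p))\<^sup>2 = (\<Sum>b\<in>Basis. (x \<bullet> b - p \<bullet> b)\<^sup>2)"
      by (simp add: power2_eq_square inner_diff_left)
    then show ?thesis
      by (simp add: exp_sum[symmetric] sum_divide_distrib[symmetric] sum_negf)
  qed
  have "(\<integral>\<^sup>+x. ennreal (exp (- (norm (x - p))\<^sup>2 / s)) \<partial>lborel)
      = (\<integral>\<^sup>+x. ennreal (\<Prod>b\<in>Basis. (\<lambda>b t. exp (- (t - p \<bullet> b)\<^sup>2 / s)) b (x \<bullet> b)) \<partial>lborel)"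
    by (rule nn_integral_cong, rule arg_cong[where f=ennreal], rule product)
  also have "\<dots> = (\<Prod>b\<in>Basis. (\<integral>\<^sup>+t. ennreal (exp (- (t - p \<bullet> b)\<^sup>2 / s)) \<partial>lborel))"
    using nn_integral_lborel_prod[of "\<lambda>b t. exp (- (t - p \<bullet> b)\<^sup>2 / s)"] by (simp add: prod_ennreal)
  also have "\<dots> = ennreal (sqrt (pi * s) ^ DIM('a))"
    using assms by (simp add: nn_integral_gaussian_real[OF assms, simplified] ennreal_power)
  also have "sqrt (pi * s) ^ DIM('a) = (pi * s) powr (real DIM('a) / 2)"
  proof -
    have "sqrt (pi * s) = (pi * s) powr (1 / 2)"
      using assms by (simp add: powr_half_sqrt)
    then show ?thesis
      using assms by (simp add: powr_powr powr_realpow[symmetric])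
  qed
  finally show ?thesis .
qed

abbreviation gauss_const :: "real \<Rightarrow> nat \<Rightarrow> real" where
  "gauss_const \<eta> d \<equiv> (2 * pi * \<eta>) powr (- real d / 2)"

lemma gauss_const_mult_nn_integral:
  fixes x :: "'a::euclidean_space"
  assumes "\<eta> > 0"
  shows "ennreal (gauss_const \<eta> DIM('a)) * (\<integral>\<^sup>+y. ennreal (exp (- (norm (x - y))\<^sup>2 / (2 * \<eta>))) \<partial>lborel) = 1"
proof -
  have "(\<integral>\<^sup>+y. ennreal (exp (- (norm (x - y))\<^sup>2 / (2 * \<eta>))) \<partial>lborel)
      = ennreal ((pi * (2 * \<eta>)) powr (real DIM('a) / 2))"
    using nn_integral_gaussian[of "2 * \<eta>" x] assms by (simp add: norm_minus_commute)
  then show ?thesis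
    using assms by (simp add: ennreal_mult''[symmetric] powr_add[symmetric] mult.commute mult.left_commute)
qed

lemma nn_integral_gauss_kernel:
  fixes x :: "'a::euclidean_space"
  assumes [measurable]: "F \<in> borel_measurable borel"
  shows "(\<integral>\<^sup>+y. F y \<partial>gauss_kernel \<eta> x)
       = (\<integral>\<^sup>+y. ennreal (gauss_const \<eta> DIM('a)) * ennreal (exp (- (norm (x - y))\<^sup>2 / (2 * \<eta>))) * F y \<partial>lborel)"
  unfolding gauss_kernel_def
  by (subst nn_integral_density) (auto intro!: nn_integral_cong simp: ennreal_mult norm_minus_commute)

lemma sets_gauss_kernel [simp]: "sets (gauss_kernel \<eta> x) = sets borel"
  by (simp add: gauss_kernel_def)

lemma prob_space_gauss_kernel:
  fixes x :: "'a::euclidean_space"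
  assumes "\<eta> > 0"
  shows "prob_space (gauss_kernel \<eta> x)"
proof
  have "(\<integral>\<^sup>+y. 1 \<partial>gauss_kernel \<eta> x)
      = (\<integral>\<^sup>+y. ennreal (gauss_const \<eta> DIM('a)) * ennreal (exp (- (norm (x - y))\<^sup>2 / (2 * \<eta>))) * 1 \<partial>lborel)"
    by (rule nn_integral_gauss_kernel) simp
  also have "\<dots> = 1"
    using gauss_const_mult_nn_integral[OF assms, of x] by (simp add: nn_integral_cmult)
  finally show "emeasure (gauss_kernel \<eta> x) (space (gauss_kernel \<eta> x)) = 1"
    by simp
qed

lemma gauss_kernel_measurable:
  assumes "\<eta> > 0"
  shows "gauss_kernel \<eta> \<in> (borel :: 'a::euclidean_space measure) \<rightarrow>\<^sub>M subprob_algebra borel"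
proof (rule measurable_subprob_algebra)
  fix a :: 'a
  show "subprob_space (gauss_kernel \<eta> a)"
    using prob_space_gauss_kernel[OF assms] by (rule prob_space_imp_subprob_space)
next
  fix A :: "'a set" assume [measurable]: "A \<in> sets borel"
  have "(\<lambda>a. emeasure (gauss_kernel \<eta> a) A)
      = (\<lambda>a. \<integral>\<^sup>+y. ennreal (gauss_const \<eta> DIM('a) * exp (- (norm (y - a))\<^sup>2 / (2 * \<eta>))) * indicator A y \<partial>lborel)"
    unfolding gauss_kernel_def by (intro ext, subst emeasure_density) auto
  also have "\<dots> \<in> borel_measurable borel"
    by measurable
  finally show "(\<lambda>a. emeasure (gauss_kernel \<eta> a) A) \<in> borel_measurable borel" .
qed simp

definition restricted_gauss_mass :: "real \<Rightarrow> 'a::euclidean_space set \<Rightarrow> 'a \<Rightarrow> ennreal" where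
  "restricted_gauss_mass \<eta> K y =
     (\<integral>\<^sup>+z. indicator K z * ennreal (exp (- (norm (z - y))\<^sup>2 / (2 * \<eta>))) \<partial>lborel)"

lemma restricted_gauss_mass_measurable [measurable]:
  assumes [measurable]: "K \<in> sets borel"
  shows "restricted_gauss_mass \<eta> K \<in> borel_measurable borel"
  unfolding restricted_gauss_mass_def by measurable

lemma restricted_gauss_mass_finite:
  assumes "\<eta> > 0"
  shows "restricted_gauss_mass \<eta> K y < \<infinity>"
proof -
  have "restricted_gauss_mass \<eta> K y \<le> (\<integral>\<^sup>+z. ennreal (exp (- (norm (z - y))\<^sup>2 / (2 * \<eta>))) \<partial>lborel)"
    unfolding restricted_gauss_mass_def by (intro nn_integral_mono) (auto split: split_indicator)
  also have "\<dots> < \<infinity>"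
    using assms by (simp add: nn_integral_gaussian[simplified])
  finally show ?thesis .
qed

lemma restricted_gauss_mass_pos:
  assumes [measurable]: "K \<in> sets borel" and "emeasure lborel K \<noteq> 0"
  shows "restricted_gauss_mass \<eta> K y > 0"
proof (rule ccontr)
  assume "\<not> restricted_gauss_mass \<eta> K y > 0"
  then have "AE z in lborel. indicator K z * ennreal (exp (- (norm (z - y))\<^sup>2 / (2 * \<eta>))) = 0"
    unfolding restricted_gauss_mass_def by (subst nn_integral_0_iff_AE[symmetric]) auto
  then have "AE z in lborel. z \<notin> K"
    by (auto elim!: eventually_mono split: split_indicator)
  then show False
    using assms by (subst (asm) AE_iff_measurable[of K]) auto
qed

lemma restricted_gauss_eq_density:
  "restricted_gauss \<eta> K y = density lborel
     (\<lambda>x. indicator K x * ennreal (exp (- (norm (x - y))\<^sup>2 / (2 * \<eta>))) / restricted_gauss_mass \<eta> K y)"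
  by (simp add: restricted_gauss_def restricted_gauss_mass_def)

lemma sets_restricted_gauss [simp]: "sets (restricted_gauss \<eta> K y) = sets borel"
  by (simp add: restricted_gauss_def)

lemma nn_integral_restricted_gauss:
  assumes [measurable]: "K \<in> sets borel" "h \<in> borel_measurable borel"
  shows "(\<integral>\<^sup>+z. h z \<partial>restricted_gauss \<eta> K y)
       = (\<integral>\<^sup>+z. indicator K z * ennreal (exp (- (norm (z - y))\<^sup>2 / (2 * \<eta>))) * h z \<partial>lborel)
         / restricted_gauss_mass \<eta> K y"
proof -
  have "(\<integral>\<^sup>+z. h z \<partial>restricted_gauss \<eta> K y)
      = (\<integral>\<^sup>+z. indicator K z * ennreal (exp (- (norm (z - y))\<^sup>2 / (2 * \<eta>))) * h z
                / restricted_gauss_mass \<eta> K y \<partial>lborel)"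
    unfolding restricted_gauss_eq_density
    by (subst nn_integral_density) (auto intro!: nn_integral_cong simp: ennreal_divide_times ennreal_times_divide mult.commute)
  then show ?thesis
    by (simp add: nn_integral_divide)
qed

lemma prob_space_restricted_gauss:
  assumes "\<eta> > 0" "K \<in> sets borel" "emeasure lborel K \<noteq> 0"
  shows "prob_space (restricted_gauss \<eta> K y)"
proof
  have "emeasure (restricted_gauss \<eta> K y) (space (restricted_gauss \<eta> K y))
      = restricted_gauss_mass \<eta> K y / restricted_gauss_mass \<eta> K y"
    using nn_integral_restricted_gauss[of K "\<lambda>_. 1" \<eta> y] assms
    by (simp add: emeasure_density restricted_gauss_eq_density restricted_gauss_mass_def)
  also have "\<dots> = 1"
    using restricted_gauss_mass_pos[OF assms(2,3), of \<eta> y] restricted_gauss_mass_finite[OF assms(1), of K y]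
    by (intro ennreal_divide_self) auto
  finally show "emeasure (restricted_gauss \<eta> K y) (space (restricted_gauss \<eta> K y)) = 1" .
qed

lemma restricted_gauss_measurable:
  assumes "\<eta> > 0" and [measurable]: "K \<in> sets borel" and "emeasure lborel K \<noteq> 0"
  shows "restricted_gauss \<eta> K \<in> (borel :: 'a::euclidean_space measure) \<rightarrow>\<^sub>M subprob_algebra borel"
proof (rule measurable_subprob_algebra)
  fix a :: 'a
  show "subprob_space (restricted_gauss \<eta> K a)"
    using prob_space_restricted_gauss[OF assms] by (rule prob_space_imp_subprob_space)
next
  fix A :: "'a set" assume [measurable]: "A \<in> sets borel"
  have "(\<lambda>a. emeasure (restricted_gauss \<eta> K a) A)
      = (\<lambda>a. (\<integral>\<^sup>+z. indicator K z * ennreal (exp (- (norm (z - a))\<^sup>2 / (2 * \<eta>))) * indicator A z \<partial>lborel)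
             / restricted_gauss_mass \<eta> K a)"
  proof
    fix a
    have "emeasure (restricted_gauss \<eta> K a) A = (\<integral>\<^sup>+z. indicator A z \<partial>restricted_gauss \<eta> K a)"
      by simp
    also have "\<dots> = (\<integral>\<^sup>+z. indicator K z * ennreal (exp (- (norm (z - a))\<^sup>2 / (2 * \<eta>))) * indicator A z \<partial>lborel)
          / restricted_gauss_mass \<eta> K a"
      by (rule nn_integral_restricted_gauss) auto
    finally show "emeasure (restricted_gauss \<eta> K a) A = \<dots>" .
  qed
  also have "\<dots> \<in> borel_measurable borel"
    by measurable
  finally show "(\<lambda>a. emeasure (restricted_gauss \<eta> K a) A) \<in> borel_measurable borel" .
qed simp

section \<open>Stationarity of the uniform distribution and warmness\<close>

lemma nn_integral_gauss_kernel_on: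
  fixes K :: "'a::euclidean_space set"
  assumes [measurable]: "K \<in> sets borel" "F \<in> borel_measurable borel"
  shows "(\<integral>\<^sup>+x. indicator K x * (\<integral>\<^sup>+y. F y \<partial>gauss_kernel \<eta> x) \<partial>lborel)
       = (\<integral>\<^sup>+y. ennreal (gauss_const \<eta> DIM('a)) * (F y * restricted_gauss_mass \<eta> K y) \<partial>lborel)"
proof -
  let ?C = "ennreal (gauss_const \<eta> DIM('a))"
  let ?e = "\<lambda>x y::'a. ennreal (exp (- (norm (x - y))\<^sup>2 / (2 * \<eta>)))"
  have "(\<integral>\<^sup>+x. indicator K x * (\<integral>\<^sup>+y. F y \<partial>gauss_kernel \<eta> x) \<partial>lborel)
      = (\<integral>\<^sup>+x. (\<integral>\<^sup>+y. (?C * F y) * (indicator K x * ?e x y) \<partial>lborel) \<partial>lborel)"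
    by (intro nn_integral_cong) (simp add: nn_integral_gauss_kernel nn_integral_cmult[symmetric] ac_simps)
  also have "\<dots> = (\<integral>\<^sup>+y. (\<integral>\<^sup>+x. (?C * F y) * (indicator K x * ?e x y) \<partial>lborel) \<partial>lborel)"
    by (subst lborel_pair.Fubini') auto
  also have "\<dots> = (\<integral>\<^sup>+y. ?C * (F y * restricted_gauss_mass \<eta> K y) \<partial>lborel)"
    by (intro nn_integral_cong) (simp add: nn_integral_cmult restricted_gauss_mass_def mult.assoc)
  finally show ?thesis .
qed

text \<open>Lebesgue measure on \<open>K\<close>, hence the uniform distribution, is invariant under one ASF step:
  the joint density of \<open>(x, y)\<close> is symmetric in the Gaussian factor, and the restricted Gaussian
  is exactly the conditional law of \<open>x\<close> given \<open>y\<close>.\<close>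
lemma lebesgue_on_invariant_asf_step:
  fixes K :: "'a::euclidean_space set"
  assumes "\<eta> > 0" and [measurable]: "K \<in> sets borel" and "emeasure lborel K \<noteq> 0"
    and [measurable]: "h \<in> borel_measurable borel"
  shows "(\<integral>\<^sup>+x. indicator K x * (\<integral>\<^sup>+y. (\<integral>\<^sup>+z. h z \<partial>restricted_gauss \<eta> K y) \<partial>gauss_kernel \<eta> x) \<partial>lborel)
       = (\<integral>\<^sup>+x. indicator K x * h x \<partial>lborel)"
proof -
  let ?C = "ennreal (gauss_const \<eta> DIM('a))"
  let ?e = "\<lambda>z y::'a. ennreal (exp (- (norm (z - y))\<^sup>2 / (2 * \<eta>)))"
  have [measurable]: "(\<lambda>y. \<integral>\<^sup>+z. h z \<partial>restricted_gauss \<eta> K y) \<in> borel_measurable borel"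
    by (rule measurable_compose[OF restricted_gauss_measurable[OF assms(1-3)]
          nn_integral_measurable_subprob_algebra]) simp
  have mass_cancel: "(\<integral>\<^sup>+z. h z \<partial>restricted_gauss \<eta> K y) * restricted_gauss_mass \<eta> K y
      = (\<integral>\<^sup>+z. indicator K z * ?e z y * h z \<partial>lborel)" for y
    using restricted_gauss_mass_pos[OF assms(2,3), of \<eta> y] restricted_gauss_mass_finite[OF assms(1), of K y]
    by (simp add: nn_integral_restricted_gauss ennreal_divide_times)
  have "(\<integral>\<^sup>+x. indicator K x * (\<integral>\<^sup>+y. (\<integral>\<^sup>+z. h z \<partial>restricted_gauss \<eta> K y) \<partial>gauss_kernel \<eta> x) \<partial>lborel)
      = (\<integral>\<^sup>+y. ?C * ((\<integral>\<^sup>+z. h z \<partial>restricted_gauss \<eta> K y) * restricted_gauss_mass \<eta> K y) \<partial>lborel)"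
    by (rule nn_integral_gauss_kernel_on) auto
  also have "\<dots> = (\<integral>\<^sup>+y. (\<integral>\<^sup>+z. ?C * ?e z y * (indicator K z * h z) \<partial>lborel) \<partial>lborel)"
    by (intro nn_integral_cong) (subst mass_cancel, simp add: nn_integral_cmult[symmetric] ac_simps)
  also have "\<dots> = (\<integral>\<^sup>+z. (\<integral>\<^sup>+y. (indicator K z * h z) * (?C * ?e z y) \<partial>lborel) \<partial>lborel)"
    by (subst lborel_pair.Fubini') (auto intro!: nn_integral_cong simp: ac_simps)
  also have "\<dots> = (\<integral>\<^sup>+z. indicator K z * h z \<partial>lborel)"
    by (simp add: nn_integral_cmult gauss_const_mult_nn_integral[OF assms(1), simplified])
  finally show ?thesis .
qed

lemma nn_integral_le_warm:
  assumes "sigma_finite_measure \<pi>" "warm M \<mu> \<pi>" "f \<in> borel_measurable \<pi>"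
  shows "(\<integral>\<^sup>+x. f x \<partial>\<mu>) \<le> ennreal M * (\<integral>\<^sup>+x. f x \<partial>\<pi>)"
proof -
  have "(\<integral>\<^sup>+x. f x \<partial>\<mu>) = (\<integral>\<^sup>+x. RN_deriv \<pi> \<mu> x * f x \<partial>\<pi>)"
    using assms by (intro sigma_finite_measure.RN_deriv_nn_integral) (auto simp: warm_def)
  also have "\<dots> \<le> (\<integral>\<^sup>+x. ennreal M * f x \<partial>\<pi>)"
    using assms(2) unfolding warm_def
    by (intro nn_integral_mono_AE) (auto elim!: eventually_mono intro: mult_right_mono)
  finally show ?thesis
    by (simp add: nn_integral_cmult assms(3))
qed

lemma sets_asf_x_law:
  assumes "sets \<mu>0 = sets borel"
  shows "sets (asf_x_law \<eta> K \<mu>0 k) = (sets borel :: 'a::euclidean_space set set)"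
proof (induction k)
  case (Suc k)
  have "sets (asf_x_law \<eta> K \<mu>0 k \<bind> gauss_kernel \<eta>) = sets borel"
    using sets_eq_imp_space_eq[OF Suc] by simp
  from sets_eq_imp_space_eq[OF this] show ?case
    by simp
qed (use assms in simp)

lemma nn_integral_asf_x_law_le:
  fixes K :: "'a::euclidean_space set"
  assumes "\<eta> > 0" and [measurable]: "K \<in> sets borel"
    and "emeasure lborel K \<noteq> 0" "emeasure lborel K \<noteq> \<infinity>"
    and warm: "warm M \<mu>0 (uniform_measure lborel K)"
    and "h \<in> borel_measurable borel"
  shows "(\<integral>\<^sup>+x. h x \<partial>asf_x_law \<eta> K \<mu>0 k)
       \<le> ennreal M / emeasure lborel K * (\<integral>\<^sup>+x. indicator K x * h x \<partial>lborel)"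
  using assms(6)
proof (induction k arbitrary: h)
  case 0
  note [measurable] = "0"
  interpret uniform: prob_space "uniform_measure lborel K"
    using assms(3,4) by (rule prob_space_uniform_measure)
  have "(\<integral>\<^sup>+x. h x \<partial>\<mu>0) \<le> ennreal M * (\<integral>\<^sup>+x. h x \<partial>uniform_measure lborel K)"
    using warm by (intro nn_integral_le_warm) (auto intro: uniform.sigma_finite_measure_axioms)
  also have "\<dots> = ennreal M / emeasure lborel K * (\<integral>\<^sup>+x. indicator K x * h x \<partial>lborel)"
    by (simp add: nn_integral_uniform_measure ennreal_times_divide ennreal_divide_times mult.commute)
  finally show ?case
    by simp
next
  case (Suc k)
  note [measurable] = Suc.prems
  have sets_x: "sets (asf_x_law \<eta> K \<mu>0 k) = sets borel"
    using warm by (intro sets_asf_x_law) (simp add: warm_def)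
  then have sets_y: "sets (asf_x_law \<eta> K \<mu>0 k \<bind> gauss_kernel \<eta>) = sets borel"
    using sets_eq_imp_space_eq[OF sets_x] by simp
  have gauss: "gauss_kernel \<eta> \<in> asf_x_law \<eta> K \<mu>0 k \<rightarrow>\<^sub>M subprob_algebra borel"
    using gauss_kernel_measurable[OF assms(1)] by (simp add: measurable_cong_sets[OF sets_x refl])
  have restricted: "restricted_gauss \<eta> K \<in> (asf_x_law \<eta> K \<mu>0 k \<bind> gauss_kernel \<eta>) \<rightarrow>\<^sub>M subprob_algebra borel"
    using restricted_gauss_measurable[OF assms(1-3)] by (simp add: measurable_cong_sets[OF sets_y refl])
  have [measurable]: "(\<lambda>y. \<integral>\<^sup>+z. h z \<partial>restricted_gauss \<eta> K y) \<in> borel_measurable borel"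
    by (rule measurable_compose[OF restricted_gauss_measurable[OF assms(1-3)]
          nn_integral_measurable_subprob_algebra]) simp
  have [measurable]: "(\<lambda>x. \<integral>\<^sup>+y. (\<integral>\<^sup>+z. h z \<partial>restricted_gauss \<eta> K y) \<partial>gauss_kernel \<eta> x) \<in> borel_measurable borel"
    by (rule measurable_compose[OF gauss_kernel_measurable[OF assms(1)]
          nn_integral_measurable_subprob_algebra]) simp
  have "(\<integral>\<^sup>+x. h x \<partial>asf_x_law \<eta> K \<mu>0 (Suc k))
      = (\<integral>\<^sup>+x. (\<integral>\<^sup>+y. (\<integral>\<^sup>+z. h z \<partial>restricted_gauss \<eta> K y) \<partial>gauss_kernel \<eta> x) \<partial>asf_x_law \<eta> K \<mu>0 k)"
    by (simp add: nn_integral_bind[OF _ restricted] nn_integral_bind[OF _ gauss])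
  also have "\<dots> \<le> ennreal M / emeasure lborel K
      * (\<integral>\<^sup>+x. indicator K x * (\<integral>\<^sup>+y. (\<integral>\<^sup>+z. h z \<partial>restricted_gauss \<eta> K y) \<partial>gauss_kernel \<eta> x) \<partial>lborel)"
    by (rule Suc.IH) measurable
  also have "\<dots> = ennreal M / emeasure lborel K * (\<integral>\<^sup>+x. indicator K x * h x \<partial>lborel)"
    using assms(1-3) by (simp add: lebesgue_on_invariant_asf_step)
  finally show ?case .
qed

lemma nn_integral_asf_y_law_le:
  fixes K :: "'a::euclidean_space set"
  assumes "\<eta> > 0" and [measurable]: "K \<in> sets borel"
    and "emeasure lborel K \<noteq> 0" "emeasure lborel K \<noteq> \<infinity>"
    and warm: "warm M \<mu>0 (uniform_measure lborel K)"
    and [measurable]: "F \<in> borel_measurable borel"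
  shows "(\<integral>\<^sup>+y. F y \<partial>asf_y_law \<eta> K \<mu>0 k) \<le> ennreal M / emeasure lborel K
           * (\<integral>\<^sup>+y. ennreal (gauss_const \<eta> DIM('a)) * (F y * restricted_gauss_mass \<eta> K y) \<partial>lborel)"
proof -
  have sets_x: "sets (asf_x_law \<eta> K \<mu>0 k) = sets borel"
    using warm by (intro sets_asf_x_law) (simp add: warm_def)
  have gauss: "gauss_kernel \<eta> \<in> asf_x_law \<eta> K \<mu>0 k \<rightarrow>\<^sub>M subprob_algebra borel"
    using gauss_kernel_measurable[OF assms(1)] by (simp add: measurable_cong_sets[OF sets_x refl])
  have [measurable]: "(\<lambda>x. \<integral>\<^sup>+y. F y \<partial>gauss_kernel \<eta> x) \<in> borel_measurable borel"
    by (rule measurable_compose[OF gauss_kernel_measurable[OF assms(1)]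
          nn_integral_measurable_subprob_algebra]) simp
  have "(\<integral>\<^sup>+y. F y \<partial>asf_y_law \<eta> K \<mu>0 k) = (\<integral>\<^sup>+x. (\<integral>\<^sup>+y. F y \<partial>gauss_kernel \<eta> x) \<partial>asf_x_law \<eta> K \<mu>0 k)"
    unfolding asf_y_law_def by (rule nn_integral_bind[OF _ gauss]) simp
  also have "\<dots> \<le> ennreal M / emeasure lborel K * (\<integral>\<^sup>+x. indicator K x * (\<integral>\<^sup>+y. F y \<partial>gauss_kernel \<eta> x) \<partial>lborel)"
    using assms(1-5) by (rule nn_integral_asf_x_law_le) measurable
  also have "\<dots> = ennreal M / emeasure lborel K
      * (\<integral>\<^sup>+y. ennreal (gauss_const \<eta> DIM('a)) * (F y * restricted_gauss_mass \<eta> K y) \<partial>lborel)"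
    by (simp add: nn_integral_gauss_kernel_on)
  finally show ?thesis .
qed

section \<open>Exponential moments of the distance to \<open>K\<close>\<close>

lemma mem_scaled_if_infdist_le:
  fixes K :: "'a::euclidean_space set"
  assumes "closed K" "convex K" "ball 0 1 \<subseteq> K" "r \<ge> 0" "infdist y K \<le> r"
  shows "y \<in> (\<lambda>x. (1 + r) *\<^sub>R x) ` K"
proof -
  have "K \<noteq> {}"
    using assms(3) by auto
  then obtain p where p: "p \<in> K" and "infdist y K = dist y p"
    using infdist_attains_inf[OF assms(1)] by metis
  then have dist_yp: "dist y p \<le> r"
    using assms(5) by simp
  show ?thesis
  proof (cases "r = 0")
    case True
    then show ?thesis
      using p dist_yp by auto
  next
    case False
    then have r: "r > 0"
      using assms(4) by simp
    define u where "u = (1 / r) *\<^sub>R (y - p)"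
    have "u \<in> cball 0 1"
      using dist_yp r by (simp add: u_def dist_norm divide_le_eq)
    also have "cball (0::'a) 1 \<subseteq> K"
      using closure_minimal[OF assms(3,1)] by simp
    finally have "u \<in> K" .
    \<comment> \<open>\<open>y = p + r u\<close> is \<open>(1 + r)\<close> times a convex combination of \<open>p\<close> and \<open>u\<close>.\<close>
    define q where "q = (1 / (1 + r)) *\<^sub>R p + (r / (1 + r)) *\<^sub>R u"
    have "q \<in> K"
      unfolding q_def using r \<open>u \<in> K\<close> p by (intro convexD[OF assms(2)]) (auto simp: field_simps)
    moreover have "y = (1 + r) *\<^sub>R q"
      unfolding q_def u_def using r by (simp add: scaleR_add_right algebra_simps)
    ultimately show ?thesis
      by blast
  qed
qed

lemma emeasure_infdist_le:
  fixes K :: "'a::euclidean_space set"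
  assumes "closed K" "convex K" "ball 0 1 \<subseteq> K" "r \<ge> 0"
  shows "emeasure lborel {y. infdist y K \<le> r} \<le> ennreal ((1 + r) ^ DIM('a)) * emeasure lborel K"
proof -
  have "closed {y::'a. infdist y K \<le> r}"
    by (intro closed_Collect_le continuous_intros)
  then have "emeasure lborel {y. infdist y K \<le> r} = emeasure lebesgue {y. infdist y K \<le> r}"
    by simp
  also have "\<dots> \<le> emeasure lebesgue ((\<lambda>x. (1 + r) *\<^sub>R x + 0) ` K)"
    using mem_scaled_if_infdist_le[OF assms] closed_scaling[OF assms(1), of "1 + r"]
    by (intro emeasure_mono) auto
  also have "\<dots> = ennreal ((1 + r) ^ DIM('a)) * emeasure lborel K"
    using emeasure_lebesgue_affine[of "1 + r" 0 K] assms(1,4) by simp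
  finally show ?thesis .
qed

lemma nn_integral_exp_tail:
  fixes a t :: real
  assumes "a > 0"
  shows "(\<integral>\<^sup>+r. ennreal (a * exp (- a * r)) * indicator {t..} r \<partial>lborel) = ennreal (exp (- a * t))"
proof -
  have "(\<integral>\<^sup>+r. ennreal (a * exp (- a * r)) * indicator {t..} r \<partial>lborel)
      = (\<integral>\<^sup>+s. ennreal (exp (- a * t)) * ennreal (exponential_density a s) \<partial>lborel)"
    using nn_integral_real_affine[of "\<lambda>r. ennreal (a * exp (- a * r)) * indicator {t..} r" 1 t] assms
    by (auto intro!: nn_integral_cong simp: exponential_density_def ennreal_mult[symmetric]
        exp_add[symmetric] algebra_simps split: split_indicator)
  also have "\<dots> = ennreal (exp (- a * t))"
    using prob_space.emeasure_space_1[OF prob_space_exponential_density[OF assms]]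
    by (simp add: nn_integral_cmult emeasure_density)
  finally show ?thesis .
qed

lemma nn_integral_exp_neg_layer_cake:
  fixes f :: "'a::euclidean_space \<Rightarrow> real"
  assumes "c > 0" and [measurable]: "f \<in> borel_measurable borel" and "\<And>y. f y \<ge> 0"
  shows "(\<integral>\<^sup>+y. ennreal (exp (- c * f y)) \<partial>lborel)
       = (\<integral>\<^sup>+r. ennreal (c * exp (- c * r)) * indicator {0..} r * emeasure lborel {y. f y \<le> r} \<partial>lborel)"
proof -
  have [measurable]: "{p \<in> space (lborel \<Otimes>\<^sub>M lborel). f (snd p) \<le> fst p} \<in> sets ((lborel :: real measure) \<Otimes>\<^sub>M (lborel :: 'a measure))"
    by measurable
  have [measurable]: "(\<lambda>(r::real, y::'a). indicator {y. f y \<le> r} y :: ennreal) \<in> borel_measurable (lborel \<Otimes>\<^sub>M lborel)"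
    by (rule measurable_cong[where f="indicator {p \<in> space (lborel \<Otimes>\<^sub>M lborel). f (snd p) \<le> fst p}", THEN iffD1])
       (auto simp: space_pair_measure split: split_indicator)
  have "(\<integral>\<^sup>+y. ennreal (exp (- c * f y)) \<partial>lborel)
      = (\<integral>\<^sup>+y. (\<integral>\<^sup>+r. ennreal (c * exp (- c * r)) * indicator {0..} r * indicator {y. f y \<le> r} y \<partial>lborel) \<partial>lborel)"
    using assms(3) by (intro nn_integral_cong)
      (subst nn_integral_exp_tail[OF assms(1), symmetric], auto intro!: nn_integral_cong dest: order.trans[OF assms(3)] split: split_indicator)
  also have "\<dots> = (\<integral>\<^sup>+r. (\<integral>\<^sup>+y. (ennreal (c * exp (- c * r)) * indicator {0..} r) * indicator {y. f y \<le> r} y \<partial>lborel) \<partial>lborel)"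
    by (subst lborel_pair.Fubini') (auto simp: mult.assoc)
  also have "\<dots> = (\<integral>\<^sup>+r. ennreal (c * exp (- c * r)) * indicator {0..} r * emeasure lborel {y. f y \<le> r} \<partial>lborel)"
    by (intro nn_integral_cong nn_integral_cmult_indicator) measurable
  finally show ?thesis .
qed

lemma nn_integral_exp_neg_infdist_le:
  fixes K :: "'a::euclidean_space set"
  assumes K: "closed K" "convex K" "ball 0 1 \<subseteq> K" and c: "c > real DIM('a)"
  shows "(\<integral>\<^sup>+y. ennreal (exp (- c * infdist y K)) \<partial>lborel)
       \<le> ennreal (c / (c - real DIM('a))) * emeasure lborel K"
proof -
  let ?d = "real DIM('a)"
  have c0: "c > 0"
    using c by (metis DIM_positive of_nat_0_less_iff less_trans)
  have cd: "c - ?d > 0"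
    using c by simp
  have integrand_le: "ennreal (c * exp (- c * r)) * indicator {0..} r * emeasure lborel {y. infdist y K \<le> r}
      \<le> ennreal (c / (c - ?d)) * emeasure lborel K * (ennreal ((c - ?d) * exp (- (c - ?d) * r)) * indicator {0..} r)"
    for r :: real
  proof (cases "r \<ge> 0")
    case True
    have "(1 + r) ^ DIM('a) \<le> exp r ^ DIM('a)"
      using True by (intro power_mono) auto
    then have "ennreal ((1 + r) ^ DIM('a)) * emeasure lborel K \<le> ennreal (exp (?d * r)) * emeasure lborel K"
      by (intro mult_right_mono ennreal_leI) (simp_all add: exp_of_nat_mult)
    with emeasure_infdist_le[OF K True]
    have "emeasure lborel {y. infdist y K \<le> r} \<le> ennreal (exp (?d * r)) * emeasure lborel K"
      by (rule order_trans)
    then have "ennreal (c * exp (- c * r)) * emeasure lborel {y. infdist y K \<le> r}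
        \<le> ennreal (c * exp (- c * r)) * (ennreal (exp (?d * r)) * emeasure lborel K)"
      by (rule mult_left_mono) simp
    also have "\<dots> = ennreal (c * exp (- c * r) * exp (?d * r)) * emeasure lborel K"
      using c0 by (simp add: ennreal_mult mult.assoc)
    also have "c * exp (- c * r) * exp (?d * r) = c / (c - ?d) * ((c - ?d) * exp (- (c - ?d) * r))"
      using cd by (simp add: exp_add[symmetric] field_simps)
    also have "ennreal (c / (c - ?d) * ((c - ?d) * exp (- (c - ?d) * r))) * emeasure lborel K
        = ennreal (c / (c - ?d)) * emeasure lborel K * ennreal ((c - ?d) * exp (- (c - ?d) * r))"
    proof -
      have "ennreal (c / (c - ?d) * ((c - ?d) * exp (- (c - ?d) * r)))
          = ennreal (c / (c - ?d)) * ennreal ((c - ?d) * exp (- (c - ?d) * r))"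
        using c0 cd by (intro ennreal_mult) auto
      then show ?thesis
        by (simp only: mult_ac)
    qed
    finally show ?thesis
      using True by simp
  qed simp
  have "(\<integral>\<^sup>+y. ennreal (exp (- c * infdist y K)) \<partial>lborel)
      = (\<integral>\<^sup>+r. ennreal (c * exp (- c * r)) * indicator {0..} r * emeasure lborel {y. infdist y K \<le> r} \<partial>lborel)"
    using c0 by (intro nn_integral_exp_neg_layer_cake)
      (auto intro!: borel_measurable_continuous_onI continuous_intros infdist_nonneg)
  also have "\<dots> \<le> (\<integral>\<^sup>+r. ennreal (c / (c - ?d)) * emeasure lborel K
                        * (ennreal ((c - ?d) * exp (- (c - ?d) * r)) * indicator {0..} r) \<partial>lborel)"
    by (intro nn_integral_mono integrand_le)
  also have "\<dots> = ennreal (c / (c - ?d)) * emeasure lborel K"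
    using nn_integral_exp_tail[OF cd, of 0] by (simp add: nn_integral_cmult)
  finally show ?thesis .
qed

section \<open>The expected number of trials\<close>

lemma P2_lower_bound:
  fixes d \<eta> :: real and xh y x :: "'a::real_normed_vector"
  assumes d: "d \<ge> 1" and \<eta>: "\<eta> = 1 / d\<^sup>2"
  shows "P2 \<eta> d xh y x \<ge> d ^ 3 / (2 * (d + 1)) * (norm (x - xh))\<^sup>2 + 3 / 2 * d * norm (xh - y)
                          - (19 / 8 + 25 / (2 * d))"
proof -
  define r where "r = norm (x - xh)"
  define s where "s = norm (xh - y)"
  define a where "a = sqrt (2 * \<eta> / d)"
  have d0: "d > 0"
    using d by simp
  have a2: "(d\<^sup>2 / 2) * a\<^sup>2 = 1 / d"
    using d0 by (simp add: a_def \<eta> power2_eq_square field_simps)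
  have da: "d * a = sqrt (2 / d)"
  proof -
    have "d * a = sqrt (d\<^sup>2 * (2 * \<eta> / d))"
      using real_sqrt_mult[of "d\<^sup>2" "2 * \<eta> / d"] d0 by (simp only: a_def real_sqrt_abs)
    also have "d\<^sup>2 * (2 * \<eta> / d) = 2 / d"
      using d0 by (simp add: \<eta> power2_eq_square field_simps)
    finally show ?thesis .
  qed
  \<comment> \<open>Complete the squares \<open>(r - a (d + 1))\<^sup>2\<close> and \<open>(d (s - a) - 3/2)\<^sup>2\<close>; the first leaves
    the slightly wider Gaussian of variance \<open>\<eta> (d + 1) / d\<close> in \<open>r\<close>, the second a linear decay in \<open>s\<close>.\<close>
  have square_r: "(d\<^sup>2 / 2) * (r\<^sup>2 - 2 * a * r) \<ge> d ^ 3 / (2 * (d + 1)) * r\<^sup>2 - 1 - 1 / d"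
  proof -
    have "0 \<le> (d\<^sup>2 / (2 * (d + 1))) * (r - a * (d + 1))\<^sup>2"
      using d0 by simp
    also have "\<dots> = (d\<^sup>2 / 2) * (r\<^sup>2 - 2 * a * r) - d ^ 3 / (2 * (d + 1)) * r\<^sup>2 + (d\<^sup>2 / 2) * a\<^sup>2 * (d + 1)"
      using d0 by (simp add: power2_eq_square power3_eq_cube field_simps)
    moreover have "(d\<^sup>2 / 2) * a\<^sup>2 * (d + 1) = 1 + 1 / d"
      unfolding a2 using d0 by (simp add: field_simps)
    ultimately show ?thesis
      by linarith
  qed
  have square_s: "(d\<^sup>2 / 2) * (s\<^sup>2 - 2 * a * s) \<ge> 3 / 2 * d * s - 3 / 2 * (d * a) - 9 / 8 - 1 / d"
  proof -
    have "0 \<le> (1 / 2) * (d * (s - a) - 3 / 2)\<^sup>2"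
      by simp
    also have "\<dots> = (d\<^sup>2 / 2) * (s\<^sup>2 - 2 * a * s) + (d\<^sup>2 / 2) * a\<^sup>2 - 3 / 2 * d * s + 3 / 2 * (d * a) + 9 / 8"
      by (simp add: power2_eq_square algebra_simps)
    finally show ?thesis
      using a2 by linarith
  qed
  have amgm: "3 / 2 * sqrt (2 / d) \<le> 1 / 4 + 9 / (2 * d)"
  proof -
    have "0 \<le> (3 / 2 * sqrt (2 / d) - 1 / 2)\<^sup>2"
      by simp
    also have "\<dots> = 9 / 4 * (sqrt (2 / d))\<^sup>2 - 3 / 2 * sqrt (2 / d) + 1 / 4"
      by (simp add: power2_eq_square algebra_simps)
    finally show ?thesis
      using d0 by simp
  qed
  have P2_eq: "P2 \<eta> d xh y x = (d\<^sup>2 / 2) * (r\<^sup>2 - 2 * a * r) + (d\<^sup>2 / 2) * (s\<^sup>2 - 2 * a * s) - 6 / d"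
    using d0 by (simp add: P2_def r_def s_def a_def \<eta> power2_eq_square field_simps)
  show ?thesis
    using square_r square_s amgm unfolding P2_eq da r_def[symmetric] s_def[symmetric] by linarith
qed

definition proposal_mass_const :: "real \<Rightarrow> real" where
  "proposal_mass_const d = exp (19 / 8 + 25 / (2 * d)) * (pi * (2 * (d + 1) / d ^ 3)) powr (d / 2)"

lemma n_trials_le:
  fixes K :: "'a::euclidean_space set" and xh y :: 'a
  assumes \<eta>: "\<eta> = 1 / (real DIM('a))\<^sup>2" and "xh \<in> K"
  shows "n_trials \<eta> K xh y
       \<le> ennreal (proposal_mass_const DIM('a) * exp (- (3 / 2 * real DIM('a)) * infdist y K))
         / restricted_gauss_mass \<eta> K y"
proof -
  let ?d = "real DIM('a)"
  define S where "S = 2 * (?d + 1) / ?d ^ 3"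
  define B where "B = exp (19 / 8 + 25 / (2 * ?d)) * exp (- (3 / 2 * ?d) * infdist y K)"
  have d1: "?d \<ge> 1"
    by (simp add: DIM_positive Suc_le_eq)
  have "S > 0"
    using d1 by (simp add: S_def)
  have "infdist y K \<le> norm (xh - y)"
    using infdist_le[OF assms(2), of y] by (simp add: dist_norm norm_minus_commute)
  then have infdist_le: "3 / 2 * ?d * infdist y K \<le> 3 / 2 * ?d * norm (xh - y)"
    by (intro mult_left_mono) auto
  have S_eq: "(norm (x - xh))\<^sup>2 / S = ?d ^ 3 / (2 * (?d + 1)) * (norm (x - xh))\<^sup>2" for x
    by (simp add: S_def)
  have "- P2 \<eta> ?d xh y x \<le> (19 / 8 + 25 / (2 * ?d)) + (- (3 / 2 * ?d) * infdist y K) + (- (norm (x - xh))\<^sup>2 / S)" for x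
    using P2_lower_bound[OF d1 \<eta>, where xh=xh and y=y and x=x] infdist_le S_eq[of x] by linarith
  then have pointwise: "exp (- P2 \<eta> ?d xh y x) \<le> B * exp (- (norm (x - xh))\<^sup>2 / S)" for x
    unfolding B_def exp_add[symmetric] by (simp only: exp_le_cancel_iff)
  have "(\<integral>\<^sup>+x. ennreal (exp (- P2 \<eta> ?d xh y x)) \<partial>lborel)
      \<le> (\<integral>\<^sup>+x. ennreal B * ennreal (exp (- (norm (x - xh))\<^sup>2 / S)) \<partial>lborel)"
    using pointwise by (intro nn_integral_mono) (simp add: ennreal_mult[symmetric] B_def)
  also have "\<dots> = ennreal (B * (pi * S) powr (?d / 2))"
    using \<open>S > 0\<close> by (simp add: nn_integral_cmult nn_integral_gaussian[simplified] B_def ennreal_mult)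
  also have "B * (pi * S) powr (?d / 2) = proposal_mass_const ?d * exp (- (3 / 2 * ?d) * infdist y K)"
    by (simp add: B_def S_def proposal_mass_const_def)
  finally show ?thesis
    unfolding n_trials_def restricted_gauss_mass_def[symmetric] by (rule divide_right_mono_ennreal)
qed

lemma gauss_const_mult_proposal_mass_const_le:
  fixes n :: nat
  assumes "n \<ge> 1"
  shows "gauss_const (1 / (real n)\<^sup>2) n * proposal_mass_const n * 3 \<le> sqrt (2 * pi) * exp (13 / 4 + 20 / real n)"
proof -
  let ?d = "real n" and ?\<eta> = "1 / (real n)\<^sup>2"
  have d0: "?d > 0"
    using assms by simp
  have gauss_ratio: "gauss_const ?\<eta> n * (pi * (2 * (?d + 1) / ?d ^ 3)) powr (?d / 2) = ((?d + 1) / ?d) powr (?d / 2)"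
  proof -
    have "pi * (2 * (?d + 1) / ?d ^ 3) = (2 * pi * ?\<eta>) * ((?d + 1) / ?d)"
      using d0 by (simp add: power2_eq_square power3_eq_cube field_simps)
    then have "(pi * (2 * (?d + 1) / ?d ^ 3)) powr (?d / 2)
        = (2 * pi * ?\<eta>) powr (?d / 2) * ((?d + 1) / ?d) powr (?d / 2)"
      by (simp only: powr_mult[of "2 * pi * ?\<eta>" "(?d + 1) / ?d"])
    moreover have "gauss_const ?\<eta> n * (2 * pi * ?\<eta>) powr (?d / 2) = 1"
      using d0 by (simp add: powr_add[symmetric])
    ultimately show ?thesis
      by (simp add: mult.assoc[symmetric])
  qed
  have "((?d + 1) / ?d) powr (?d / 2) = exp (?d / 2 * ln (1 + 1 / ?d))"
    using d0 by (simp add: powr_def field_simps)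
  also have "\<dots> \<le> exp (1 / 2)"
    using ln_add_one_self_le_self[of "1 / ?d"] d0 by (simp add: field_simps)
  finally have ratio_le: "((?d + 1) / ?d) powr (?d / 2) \<le> exp (1 / 2)" .
  have "(5 / 2)\<^sup>2 \<le> 2 * pi"
    using pi_approx(1) by (simp add: power2_eq_square)
  then have "sqrt (2 * pi) \<ge> 5 / 2"
    using real_sqrt_le_mono by fastforce
  moreover have "exp (3 / 8 :: real) \<ge> 1 + 3 / 8"
    by (rule exp_ge_add_one_self)
  ultimately have "3 \<le> sqrt (2 * pi) * exp (3 / 8)"
    using mult_mono[of "5 / 2" "sqrt (2 * pi)" "1 + 3 / 8" "exp (3 / 8)"] by simp
  then have three: "3 * exp (- 3 / 8) \<le> sqrt (2 * pi)"
    by (simp add: exp_minus field_simps)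
  have "gauss_const ?\<eta> n * proposal_mass_const n * 3
      = 3 * exp (19 / 8 + 25 / (2 * ?d)) * ((?d + 1) / ?d) powr (?d / 2)"
    using gauss_ratio by (simp add: proposal_mass_const_def ac_simps)
  also have "\<dots> \<le> 3 * exp (19 / 8 + 25 / (2 * ?d)) * exp (1 / 2)"
    using ratio_le by simp
  also have "\<dots> = 3 * exp (- 3 / 8) * exp (- 15 / (2 * ?d)) * exp (13 / 4 + 20 / ?d)"
    using d0 by (simp add: exp_add[symmetric] field_simps)
  also have "\<dots> \<le> sqrt (2 * pi) * 1 * exp (13 / 4 + 20 / ?d)"
    using three d0 by (intro mult_right_mono mult_mono) auto
  finally show ?thesis
    by simp
qed

lemma emeasure_lborel_ne_zero_if_ball_subset:
  fixes K :: "'a::euclidean_space set"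
  assumes "K \<in> sets borel" "ball c r \<subseteq> K" "r > 0"
  shows "emeasure lborel K \<noteq> 0"
proof -
  have "measure lborel (ball c r) > 0"
    using content_ball_pos[OF assms(3)] by simp
  then have "emeasure lborel (ball c r) > 0"
    using emeasure_lborel_ball_finite[of c r] by (simp add: emeasure_eq_ennreal_measure)
  also have "emeasure lborel (ball c r) \<le> emeasure lborel K"
    using assms by (intro emeasure_mono) auto
  finally show ?thesis
    by simp
qed

lemma expected_trials_le:
  fixes K :: "'a::euclidean_space set"
  assumes K: "closed K" "convex K" "ball 0 1 \<subseteq> K" and "emeasure lborel K \<noteq> \<infinity>"
    and \<eta>: "\<eta> = 1 / (real DIM('a))\<^sup>2"
    and warm: "warm M \<mu>0 (uniform_measure lborel K)"
    and xh: "\<And>y. xh y \<in> K"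
  shows "(\<integral>\<^sup>+y. n_trials \<eta> K (xh y) y \<partial>asf_y_law \<eta> K \<mu>0 k)
       \<le> ennreal M * ennreal (gauss_const \<eta> DIM('a) * proposal_mass_const DIM('a) * 3)"
proof -
  let ?d = "real DIM('a)" and ?V = "emeasure lborel K"
  let ?C = "gauss_const \<eta> DIM('a)" and ?Q = "proposal_mass_const DIM('a)"
  have d1: "?d \<ge> 1"
    by (simp add: DIM_positive Suc_le_eq)
  have "\<eta> > 0"
    using \<eta> d1 by simp
  have [measurable]: "K \<in> sets borel"
    using K(1) by simp
  have "?V \<noteq> 0"
    using K(3) by (intro emeasure_lborel_ne_zero_if_ball_subset) auto
  have "?Q \<ge> 0"
    by (simp add: proposal_mass_const_def)
  define F where "F y = ennreal (?Q * exp (- (3 / 2 * ?d) * infdist y K)) / restricted_gauss_mass \<eta> K y" for y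
  have [measurable]: "(\<lambda>y. infdist y K) \<in> borel_measurable borel"
    by (intro borel_measurable_continuous_onI continuous_intros)
  then have [measurable]: "F \<in> borel_measurable borel"
    unfolding F_def by measurable
  have F_mass: "F y * restricted_gauss_mass \<eta> K y = ennreal (?Q * exp (- (3 / 2 * ?d) * infdist y K))" for y
    unfolding F_def
    using restricted_gauss_mass_pos[OF _ \<open>?V \<noteq> 0\<close>, of \<eta> y] restricted_gauss_mass_finite[OF \<open>\<eta> > 0\<close>, of K y]
    by (simp add: ennreal_divide_times)
  have "(\<integral>\<^sup>+y. n_trials \<eta> K (xh y) y \<partial>asf_y_law \<eta> K \<mu>0 k) \<le> (\<integral>\<^sup>+y. F y \<partial>asf_y_law \<eta> K \<mu>0 k)"
    unfolding F_def by (intro nn_integral_mono n_trials_le[OF \<eta> xh])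
  also have "\<dots> \<le> ennreal M / ?V * (\<integral>\<^sup>+y. ennreal ?C * (F y * restricted_gauss_mass \<eta> K y) \<partial>lborel)"
    using \<open>\<eta> > 0\<close> \<open>?V \<noteq> 0\<close> assms(4) warm by (intro nn_integral_asf_y_law_le) auto
  also have "\<dots> = ennreal M / ?V * (ennreal (?C * ?Q) * (\<integral>\<^sup>+y. ennreal (exp (- (3 / 2 * ?d) * infdist y K)) \<partial>lborel))"
    using \<open>?Q \<ge> 0\<close> by (simp add: F_mass nn_integral_cmult ennreal_mult mult.assoc)
  also have "\<dots> \<le> ennreal M / ?V * (ennreal (?C * ?Q) * (ennreal 3 * ?V))"
    using nn_integral_exp_neg_infdist_le[OF K, of "3 / 2 * ?d"] d1
    by (intro mult_left_mono) (auto simp: field_simps)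
  also have "ennreal (?C * ?Q) * (ennreal 3 * ?V) = ennreal (?C * ?Q * 3) * ?V"
    using \<open>?Q \<ge> 0\<close> by (simp add: ennreal_mult ac_simps)
  also have "ennreal M / ?V * (ennreal (?C * ?Q * 3) * ?V) = ennreal M * ennreal (?C * ?Q * 3)"
    using \<open>?V \<noteq> 0\<close> assms(4) by (simp add: ennreal_divide_times ennreal_mult_divide_eq)
  finally show ?thesis .
qed

theorem mainTheorem10:
  fixes K :: "'a::euclidean_space set" and R M :: real and \<mu>0 :: "'a measure"
    and xh :: "'a \<Rightarrow> 'a" and \<eta> :: real and k :: nat
  assumes "K \<noteq> {}" "closed K" "convex K"
    and "R > 1" "ball 0 1 \<subseteq> K" "K \<subseteq> ball 0 R"
    and "\<eta> = 1 / (real DIM('a))\<^sup>2"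
    and "prob_space \<mu>0" "warm M \<mu>0 (uniform_measure lborel K)"
    and "\<And>y. xh y \<in> K \<and>
           (1 / (2 * \<eta>)) * (norm (xh y - y))\<^sup>2
             - (INF x\<in>K. (1 / (2 * \<eta>)) * (norm (x - y))\<^sup>2) \<le> 1 / real DIM('a)"
  shows "(\<integral>\<^sup>+ y. n_trials \<eta> K (xh y) y \<partial>(asf_y_law \<eta> K \<mu>0 k))
         \<le> ennreal (sqrt (2 * pi) * M * exp (13 / 4 + 20 / real DIM('a))
                    + M * exp (9 / 4 + 12 / real DIM('a)))"
proof -
  let ?d = "real DIM('a)"
  let ?X = "gauss_const \<eta> DIM('a) * proposal_mass_const DIM('a) * 3"
  have "emeasure lborel K \<le> emeasure lborel (ball (0::'a) R)"
    using assms(6) by (intro emeasure_mono) auto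
  then have "emeasure lborel K \<noteq> \<infinity>"
    using emeasure_lborel_ball_finite[of "0::'a" R] by (auto simp: top_unique)
  then have "(\<integral>\<^sup>+ y. n_trials \<eta> K (xh y) y \<partial>(asf_y_law \<eta> K \<mu>0 k)) \<le> ennreal M * ennreal ?X"
    using assms by (intro expected_trials_le) auto
  also have "\<dots> \<le> ennreal (sqrt (2 * pi) * M * exp (13 / 4 + 20 / ?d) + M * exp (9 / 4 + 12 / ?d))"
  proof (cases "M \<ge> 0")
    case True
    have "?X \<le> sqrt (2 * pi) * exp (13 / 4 + 20 / ?d)"
      using gauss_const_mult_proposal_mass_const_le[of "DIM('a)"] assms(7) by (simp add: DIM_positive Suc_le_eq)
    then have "M * ?X \<le> M * (sqrt (2 * pi) * exp (13 / 4 + 20 / ?d))"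
      using True by (rule mult_left_mono)
    moreover have "0 \<le> M * exp (9 / 4 + 12 / ?d)"
      using True by simp
    ultimately have "M * ?X \<le> sqrt (2 * pi) * M * exp (13 / 4 + 20 / ?d) + M * exp (9 / 4 + 12 / ?d)"
      by (simp add: ac_simps)
    moreover have "ennreal M * ennreal ?X = ennreal (M * ?X)"
      using True by (intro ennreal_mult[symmetric]) (simp_all add: proposal_mass_const_def)
    ultimately show ?thesis
      by (simp only: ennreal_leI)
  qed (simp add: ennreal_neg)
  finally show ?thesis .
qed

end
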